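(* Let $G$ be a countable vertex set with fixed vertex $o$, and let $c,b$ be conductance functions on $G$ with $b_{xy}\le c_{xy}$ for all $x,y$, such that $(G,c)$ and $(G,b)$ are connected locally finite networks. Let $\mathcal I:\mathcal H_{\mathcal E_c}\to\mathcal H_{\mathcal E_b}$ be the inclusion and $\mathcal I^*$ its adjoint. Then $\Delta_b=\mathcal I\Delta_c\mathcal I^*$.
   Context: A conductance function on a countable set $G$ is a symmetric map $c:G\times G\to[0,\infty)$ with $c_{xx}=0$; $x\sim y$ iff $c_{xy}>0$; locally finite and connected. $\mathcal E_c(u,v)=\frac12\sum_{x,y}c_{xy}\overline{(u(x)-u(y))}(v(x)-v(y))$; $\mathcal H_{\mathcal E_c}$ is the Hilbert space of finite-energy functions modulo constants with inner product $\mathcal E_c$. $v_x^{(c)}$ is the unique element of $\mathcal H_{\mathcal E_c}$ with $\langle v_x^{(c)},u\rangle_{\mathcal E_c}=u(x)-u(o)$ for all $u$. The Laplacian $(\Delta_c v)(x)=\sum_{y\sim x}c_{xy}(v(x)-v(y))$ is considered as an operator on $\mathcal H_{\mathcal E_c}$ with domain $\mathrm{span}\{v_x^{(c)}\}_{x\in G}$. Same notation for $b$. *)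

theory Defs
  imports "HOL-Analysis.Analysis" "HOL-Library.Countable"
begin

definition conductance :: "('a \<Rightarrow> 'a \<Rightarrow> real) \<Rightarrow> bool" where
  "conductance c \<longleftrightarrow> (\<forall>x y. c x y = c y x) \<and> (\<forall>x y. 0 \<le> c x y) \<and> (\<forall>x. c x x = 0)"

definition locally_finite_net :: "('a \<Rightarrow> 'a \<Rightarrow> real) \<Rightarrow> bool" where
  "locally_finite_net c \<longleftrightarrow> (\<forall>x. finite {y. 0 < c x y})"

definition connected_net :: "('a \<Rightarrow> 'a \<Rightarrow> real) \<Rightarrow> bool" where
  "connected_net c \<longleftrightarrow> (\<forall>x y. (\<lambda>u v. 0 < c u v)\<^sup>*\<^sup>* x y)"

definition network :: "('a \<Rightarrow> 'a \<Rightarrow> real) \<Rightarrow> bool" where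
  "network c \<longleftrightarrow> conductance c \<and> locally_finite_net c \<and> connected_net c"

definition fin_energy :: "('a \<Rightarrow> 'a \<Rightarrow> real) \<Rightarrow> ('a \<Rightarrow> complex) \<Rightarrow> bool" where
  "fin_energy c u \<longleftrightarrow> (\<lambda>(x, y). c x y * (cmod (u x - u y))\<^sup>2) summable_on UNIV"

definition energy :: "('a \<Rightarrow> 'a \<Rightarrow> real) \<Rightarrow> ('a \<Rightarrow> complex) \<Rightarrow> ('a \<Rightarrow> complex) \<Rightarrow> complex" where
  "energy c u v = (1/2) * infsum (\<lambda>(x, y). complex_of_real (c x y) * cnj (u x - u y) * (v x - v y)) UNIV"

text \<open>Equality in H_E (functions modulo constants).\<close>
definition mod_const :: "('a \<Rightarrow> complex) \<Rightarrow> ('a \<Rightarrow> complex) \<Rightarrow> bool" where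
  "mod_const f g \<longleftrightarrow> (\<exists>k. \<forall>z. f z = g z + k)"

definition is_vx :: "('a \<Rightarrow> 'a \<Rightarrow> real) \<Rightarrow> 'a \<Rightarrow> 'a \<Rightarrow> ('a \<Rightarrow> complex) \<Rightarrow> bool" where
  "is_vx c o0 x v \<longleftrightarrow> fin_energy c v \<and> (\<forall>u. fin_energy c u \<longrightarrow> energy c v u = u x - u o0)"

definition vx :: "('a \<Rightarrow> 'a \<Rightarrow> real) \<Rightarrow> 'a \<Rightarrow> 'a \<Rightarrow> ('a \<Rightarrow> complex)" where
  "vx c o0 x = (SOME v. is_vx c o0 x v)"

text \<open>Domain of the Laplacian: span of the v_x, as a set of representatives.\<close>
definition lap_dom :: "('a \<Rightarrow> 'a \<Rightarrow> real) \<Rightarrow> 'a \<Rightarrow> ('a \<Rightarrow> complex) set" where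
  "lap_dom c o0 = {u. \<exists>S a. finite S \<and> mod_const u (\<lambda>z. \<Sum>x\<in>S. a x * vx c o0 x z)}"

definition laplacian :: "('a \<Rightarrow> 'a \<Rightarrow> real) \<Rightarrow> ('a \<Rightarrow> complex) \<Rightarrow> ('a \<Rightarrow> complex)" where
  "laplacian c v x = (\<Sum>y\<in>{y. 0 < c x y}. complex_of_real (c x y) * (v x - v y))"

text \<open>w represents I^* u, where I : H_{E_c} -> H_{E_b} is the inclusion:
  <I^* u, z>_{E_c} = <u, I z>_{E_b} for all z in H_{E_c}.\<close>
definition incl_adj :: "('a \<Rightarrow> 'a \<Rightarrow> real) \<Rightarrow> ('a \<Rightarrow> 'a \<Rightarrow> real) \<Rightarrow> ('a \<Rightarrow> complex) \<Rightarrow> ('a \<Rightarrow> complex) \<Rightarrow> bool" where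
  "incl_adj c b u w \<longleftrightarrow> fin_energy c w \<and> (\<forall>z. fin_energy c z \<longrightarrow> energy c w z = energy b u z)"

end

theory Submission
  imports Defs
begin

text \<open>
  Dirichlet's principle yields the reproducing kernels: for x \<noteq> o minimise the energy over
  the finite-energy functions u with u(o) = 0 and u(x) = 1. By the parallelogram law a minimising
  sequence is Cauchy in energy, and on a connected network energy controls point evaluations, so
  the sequence converges pointwise to a minimiser. The minimiser is orthogonal to every function
  vanishing at o and x, hence a multiple of v_x. Pairing v_x with the indicator of y gives
  \<open>\<Delta> v_x = \<delta>_x - \<delta>_o\<close>, whatever the conductance.

  Since b \<le> c, finite c-energy implies finite b-energy, and the combinations \<open>\<Sum> a_x v_x\<close> of
  c-kernels and of b-kernels have the same pairing \<open>\<Sum> cnj(a_x) (z(x) - z(o))\<close> with every such z.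
  So the first represents \<open>\<I>\<^sup>*\<close> of the second, uniquely modulo constants by connectedness, and
  both Laplacians equal \<open>\<Sum> a_x (\<delta>_x - \<delta>_o)\<close>.
\<close>

definition energy_term ::
    "('a \<Rightarrow> 'a \<Rightarrow> real) \<Rightarrow> ('a \<Rightarrow> complex) \<Rightarrow> ('a \<Rightarrow> complex) \<Rightarrow> 'a \<times> 'a \<Rightarrow> complex" where
  "energy_term c u v = (\<lambda>(x, y). complex_of_real (c x y) * cnj (u x - u y) * (v x - v y))"

definition dirichlet_term :: "('a \<Rightarrow> 'a \<Rightarrow> real) \<Rightarrow> ('a \<Rightarrow> complex) \<Rightarrow> 'a \<times> 'a \<Rightarrow> real" where
  "dirichlet_term c u = (\<lambda>(x, y). c x y * (cmod (u x - u y))\<^sup>2)"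

definition dirichlet :: "('a \<Rightarrow> 'a \<Rightarrow> real) \<Rightarrow> ('a \<Rightarrow> complex) \<Rightarrow> real" where
  "dirichlet c u = infsum (dirichlet_term c u) UNIV"

lemma cnj_mult_self: "cnj z * z = complex_of_real ((cmod z)\<^sup>2)"
  by (metis complex_norm_square mult.commute)

lemma energy_eq_infsum: "energy c u v = 1/2 * infsum (energy_term c u v) UNIV"
  by (simp add: energy_def energy_term_def)

lemma fin_energy_iff_summable: "fin_energy c u \<longleftrightarrow> dirichlet_term c u summable_on UNIV"
  by (simp add: fin_energy_def dirichlet_term_def)

lemma conductance_nonneg: "conductance c \<Longrightarrow> 0 \<le> c x y"
  by (simp add: conductance_def)

lemma conductance_sym: "conductance c \<Longrightarrow> c x y = c y x"
  by (simp add: conductance_def)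

lemma conductance_eq_0_iff:
  assumes "conductance c"
  shows "c x y = 0 \<longleftrightarrow> \<not> 0 < c x y"
  using conductance_nonneg[OF assms, of x y] by linarith

lemma has_sum_finite_support:
  assumes "finite S" and "\<And>p. p \<notin> S \<Longrightarrow> f p = 0"
  shows "(f has_sum sum f S) UNIV"
  using has_sum_cong_neutral[of UNIV S f f] has_sum_finite[OF assms(1), of f] assms(2) by auto

lemma mod_const_minus_const: "mod_const (\<lambda>z. f z - k) f"
  by (auto simp: mod_const_def intro: exI[of _ "- k"])

lemma mod_const_imp_diff_eq:
  assumes "mod_const f g"
  shows "f x - f y = g x - g y"
  using assms by (auto simp: mod_const_def)

subsection \<open>Finite energy functions\<close>

lemma dirichlet_term_nonneg: "conductance c \<Longrightarrow> 0 \<le> dirichlet_term c u p"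
  by (cases p) (simp add: dirichlet_term_def conductance_nonneg)

lemma dirichlet_nonneg: "conductance c \<Longrightarrow> 0 \<le> dirichlet c u"
  unfolding dirichlet_def by (rule infsum_nonneg) (simp add: dirichlet_term_nonneg)

lemma fin_energy_mod_const: "mod_const u u' \<Longrightarrow> fin_energy c u \<longleftrightarrow> fin_energy c u'"
  by (simp add: fin_energy_def mod_const_imp_diff_eq)

lemma fin_energy_const: "fin_energy c (\<lambda>z. k)"
  by (simp add: fin_energy_def case_prod_unfold)

lemma dirichlet_term_cmult:
  "dirichlet_term c (\<lambda>z. k * u z) = (\<lambda>p. (cmod k)\<^sup>2 * dirichlet_term c u p)"
  by (auto simp: fun_eq_iff dirichlet_term_def right_diff_distrib[symmetric] norm_mult
      power_mult_distrib)

lemma fin_energy_cmult: "fin_energy c u \<Longrightarrow> fin_energy c (\<lambda>z. k * u z)"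
  by (simp add: fin_energy_iff_summable dirichlet_term_cmult summable_on_cmult_right)

lemma fin_energy_add:
  assumes c: "conductance c" and u: "fin_energy c u" and v: "fin_energy c v"
  shows "fin_energy c (\<lambda>z. u z + v z)"
  unfolding fin_energy_iff_summable
proof (rule summable_on_comparison_test)
  show "(\<lambda>p. 2 * dirichlet_term c u p + 2 * dirichlet_term c v p) summable_on UNIV"
    using u v unfolding fin_energy_iff_summable
    by (intro summable_on_add summable_on_cmult_right)
  fix p :: "'a \<times> 'a"
  obtain x y where p: "p = (x, y)" by (cases p)
  have "cmod (u x + v x - (u y + v y)) \<le> cmod (u x - u y) + cmod (v x - v y)"
    by (metis add_diff_add norm_triangle_ineq)
  then have "(cmod (u x + v x - (u y + v y)))\<^sup>2 \<le> (cmod (u x - u y) + cmod (v x - v y))\<^sup>2"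
    by (simp add: power_mono)
  also have "\<dots> \<le> 2 * (cmod (u x - u y))\<^sup>2 + 2 * (cmod (v x - v y))\<^sup>2"
    using sum_squares_bound[of "cmod (u x - u y)" "cmod (v x - v y)"]
    by (simp add: power2_eq_square algebra_simps)
  finally have "c x y * (cmod (u x + v x - (u y + v y)))\<^sup>2
      \<le> c x y * (2 * (cmod (u x - u y))\<^sup>2 + 2 * (cmod (v x - v y))\<^sup>2)"
    by (rule mult_left_mono[OF _ conductance_nonneg[OF c]])
  then show "dirichlet_term c (\<lambda>z. u z + v z) p
      \<le> 2 * dirichlet_term c u p + 2 * dirichlet_term c v p"
    by (simp add: p dirichlet_term_def algebra_simps)
qed (rule dirichlet_term_nonneg[OF c])

lemma fin_energy_diff:
  assumes "conductance c" and "fin_energy c u" and "fin_energy c v"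
  shows "fin_energy c (\<lambda>z. u z - v z)"
  using fin_energy_add[OF assms(1,2) fin_energy_cmult[OF assms(3), of "-1"]] by simp

lemma fin_energy_sum:
  assumes c: "conductance c" and "finite S" and "\<And>x. x \<in> S \<Longrightarrow> fin_energy c (f x)"
  shows "fin_energy c (\<lambda>z. \<Sum>x\<in>S. a x * f x z)"
  using assms(2,3)
  by (induction S rule: finite_induct)
    (simp_all add: fin_energy_const fin_energy_add[OF c] fin_energy_cmult)

lemma fin_energy_mono:
  assumes b: "conductance b" and le: "\<And>x y. b x y \<le> c x y" and u: "fin_energy c u"
  shows "fin_energy b u"
  unfolding fin_energy_iff_summable
proof (rule summable_on_comparison_test)
  show "dirichlet_term c u summable_on UNIV"
    using u by (simp add: fin_energy_iff_summable)
  fix p :: "'a \<times> 'a"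
  show "dirichlet_term b u p \<le> dirichlet_term c u p"
    by (cases p) (simp add: dirichlet_term_def mult_right_mono le)
qed (rule dirichlet_term_nonneg[OF b])

lemma fin_energy_indicator:
  assumes c: "conductance c" and lf: "locally_finite_net c"
  shows "fin_energy c (indicator {y} :: 'a \<Rightarrow> complex)"
proof -
  define N where "N = {z. 0 < c y z}"
  have "finite N"
    using lf by (simp add: locally_finite_net_def N_def)
  moreover have "dirichlet_term c (indicator {y}) p = 0"
    if outside: "p \<notin> Pair y ` N \<union> prod.swap ` Pair y ` N" for p
  proof -
    obtain a b where p: "p = (a, b)" by (cases p)
    consider "a = y" "c y b = 0" | "b = y" "c a y = 0" | "a \<noteq> y" "b \<noteq> y"
      using outside conductance_eq_0_iff[OF c] conductance_sym[OF c, of a y]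
      by (force simp: p N_def)
    then show ?thesis
      by cases (auto simp: p dirichlet_term_def)
  qed
  ultimately have "(dirichlet_term c (indicator {y}) has_sum
      sum (dirichlet_term c (indicator {y})) (Pair y ` N \<union> prod.swap ` Pair y ` N)) UNIV"
    by (intro has_sum_finite_support) auto
  then show ?thesis
    unfolding fin_energy_iff_summable summable_on_def by blast
qed

subsection \<open>The energy form\<close>

lemma energy_term_summable:
  assumes c: "conductance c" and u: "fin_energy c u" and v: "fin_energy c v"
  shows "energy_term c u v summable_on UNIV"
proof (rule abs_summable_summable, rule summable_on_comparison_test)
  show "(\<lambda>p. dirichlet_term c u p + dirichlet_term c v p) summable_on UNIV"
    using u v unfolding fin_energy_iff_summable by (rule summable_on_add)
  fix p :: "'a \<times> 'a"
  obtain x y where p: "p = (x, y)" by (cases p)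
  have "cmod (u x - u y) * cmod (v x - v y) \<le> (cmod (u x - u y))\<^sup>2 + (cmod (v x - v y))\<^sup>2"
    using sum_squares_bound[of "cmod (u x - u y)" "cmod (v x - v y)"]
      mult_nonneg_nonneg[OF norm_ge_zero norm_ge_zero, of "u x - u y" "v x - v y"] by linarith
  then show "norm (energy_term c u v p) \<le> dirichlet_term c u p + dirichlet_term c v p"
    using conductance_nonneg[OF c, of x y]
    by (simp add: p energy_term_def dirichlet_term_def norm_mult mult.assoc mult_left_mono
        flip: distrib_left complex_cnj_diff)
qed simp

lemma energy_cnj_swap: "energy c v u = cnj (energy c u v)"
proof -
  have "energy_term c v u = (\<lambda>p. cnj (energy_term c u v p))"
    by (auto simp: energy_term_def fun_eq_iff)
  then show ?thesis by (simp add: energy_eq_infsum)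
qed

lemma energy_add_right:
  assumes "conductance c" and "fin_energy c u" and "fin_energy c v" and "fin_energy c w"
  shows "energy c u (\<lambda>z. v z + w z) = energy c u v + energy c u w"
proof -
  have "energy_term c u (\<lambda>z. v z + w z) = (\<lambda>p. energy_term c u v p + energy_term c u w p)"
    by (auto simp: energy_term_def fun_eq_iff algebra_simps)
  then show ?thesis
    by (simp add: energy_eq_infsum infsum_add energy_term_summable assms algebra_simps)
qed

lemma energy_cmult_right: "energy c u (\<lambda>z. k * v z) = k * energy c u v"
proof -
  have "energy_term c u (\<lambda>z. k * v z) = (\<lambda>p. k * energy_term c u v p)"
    by (auto simp: energy_term_def fun_eq_iff algebra_simps)
  then show ?thesis by (simp add: energy_eq_infsum infsum_cmult_right')
qed

lemma energy_add_left:
  assumes "conductance c" and "fin_energy c u" and "fin_energy c v" and "fin_energy c w"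
  shows "energy c (\<lambda>z. v z + w z) u = energy c v u + energy c w u"
  by (metis energy_cnj_swap energy_add_right[OF assms] complex_cnj_add)

lemma energy_cmult_left: "energy c (\<lambda>z. k * v z) u = cnj k * energy c v u"
  by (metis energy_cnj_swap energy_cmult_right complex_cnj_mult)

lemma energy_diff_left:
  assumes "conductance c" and "fin_energy c u" and "fin_energy c v" and "fin_energy c w"
  shows "energy c (\<lambda>z. v z - w z) u = energy c v u - energy c w u"
  using energy_add_left[OF assms(1-3) fin_energy_cmult[OF assms(4), of "-1"]]
    energy_cmult_left[of c "-1" w u] by simp

lemma energy_diff_right:
  assumes "conductance c" and "fin_energy c u" and "fin_energy c v" and "fin_energy c w"
  shows "energy c u (\<lambda>z. v z - w z) = energy c u v - energy c u w"
  by (metis energy_cnj_swap energy_diff_left[OF assms] complex_cnj_diff)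

lemma energy_sum_left:
  assumes c: "conductance c" and "finite S" and "\<And>x. x \<in> S \<Longrightarrow> fin_energy c (f x)"
    and u: "fin_energy c u"
  shows "energy c (\<lambda>z. \<Sum>x\<in>S. a x * f x z) u = (\<Sum>x\<in>S. cnj (a x) * energy c (f x) u)"
  using assms(2,3)
proof (induction S rule: finite_induct)
  case empty
  then show ?case by (simp add: energy_def case_prod_unfold)
next
  case (insert x F)
  then have "energy c (\<lambda>z. a x * f x z + (\<Sum>x\<in>F. a x * f x z)) u
      = energy c (\<lambda>z. a x * f x z) u + energy c (\<lambda>z. \<Sum>x\<in>F. a x * f x z) u"
    by (intro energy_add_left[OF c u] fin_energy_cmult fin_energy_sum[OF c]) auto
  then show ?case
    using insert by (simp add: energy_cmult_left)
qed

lemma energy_mod_const_left: "mod_const u u' \<Longrightarrow> energy c u v = energy c u' v"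
  by (simp add: energy_def mod_const_imp_diff_eq)

lemma energy_mod_const_right: "mod_const v v' \<Longrightarrow> energy c u v = energy c u v'"
  by (simp add: energy_def mod_const_imp_diff_eq)

lemma energy_self:
  assumes "fin_energy c u"
  shows "energy c u u = complex_of_real (dirichlet c u / 2)"
proof -
  have "energy_term c u u = (\<lambda>p. complex_of_real (dirichlet_term c u p))"
    unfolding energy_term_def dirichlet_term_def fun_eq_iff
    by (simp add: mult.assoc cnj_mult_self del: complex_cnj_diff)
  moreover have "((\<lambda>p. complex_of_real (dirichlet_term c u p))
      has_sum complex_of_real (dirichlet c u)) UNIV"
    using assms unfolding dirichlet_def fin_energy_iff_summable
    by (intro has_sum_of_real has_sum_infsum)
  ultimately show ?thesis
    by (simp add: energy_eq_infsum infsumI)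
qed

lemma energy_indicator_left:
  assumes c: "conductance c" and lf: "locally_finite_net c"
  shows "energy c (indicator {y}) v = laplacian c v y"
proof -
  define N where "N = {z. 0 < c y z}"
  have N: "finite N"
    using lf by (simp add: locally_finite_net_def N_def)
  define g where
    "g p = (if fst p = y then complex_of_real (c y (snd p)) * (v y - v (snd p)) else 0)" for p
  have g: "(g has_sum laplacian c v y) UNIV"
  proof -
    have "(g has_sum sum g (Pair y ` N)) UNIV"
      using N c by (intro has_sum_finite_support)
        (auto simp: g_def N_def conductance_eq_0_iff image_iff)
    moreover have "sum g (Pair y ` N) = laplacian c v y"
      by (simp add: laplacian_def N_def sum.reindex inj_on_def g_def)
    ultimately show ?thesis by simp
  qed
  \<comment> \<open>each edge at \<open>y\<close> occurs in both orientations, which cancels the factor \<open>1/2\<close>\<close>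
  have terms: "energy_term c (indicator {y}) v = (\<lambda>p. g p + g (prod.swap p))"
  proof
    fix p :: "'a \<times> 'a"
    obtain a b where p: "p = (a, b)" by (cases p)
    have "c a y = c y a" by (rule conductance_sym[OF c])
    then show "energy_term c (indicator {y}) v p = g p + g (prod.swap p)"
      by (auto simp: p energy_term_def g_def algebra_simps)
  qed
  have "((\<lambda>p. g (prod.swap p)) has_sum laplacian c v y) UNIV"
    using has_sum_reindex_bij_betw[OF bij_swap, of g] g by blast
  from has_sum_add[OF g this]
  have "(energy_term c (indicator {y}) v has_sum 2 * laplacian c v y) UNIV"
    unfolding terms mult_2 .
  then show ?thesis
    by (simp add: energy_eq_infsum infsumI)
qed

subsection \<open>The Dirichlet sum\<close>

lemma dirichlet_term_le_dirichlet:
  assumes "conductance c" and "fin_energy c f"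
  shows "c x y * (cmod (f x - f y))\<^sup>2 \<le> dirichlet c f"
proof -
  have "sum (dirichlet_term c f) {(x, y)} \<le> dirichlet c f"
    unfolding dirichlet_def using assms
    by (intro finite_sum_le_infsum) (auto simp: fin_energy_iff_summable dirichlet_term_nonneg)
  then show ?thesis by (simp add: dirichlet_term_def)
qed

lemma dirichlet_cmult: "dirichlet c (\<lambda>z. k * u z) = (cmod k)\<^sup>2 * dirichlet c u"
  by (simp add: dirichlet_def dirichlet_term_cmult infsum_cmult_right')

lemma dirichlet_parallelogram:
  assumes c: "conductance c" and u: "fin_energy c u" and w: "fin_energy c w"
  shows "dirichlet c (\<lambda>z. u z + w z) + dirichlet c (\<lambda>z. u z - w z)
    = 2 * dirichlet c u + 2 * dirichlet c w"
proof -
  have terms: "dirichlet_term c (\<lambda>z. u z + w z) p + dirichlet_term c (\<lambda>z. u z - w z) p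
      = 2 * dirichlet_term c u p + 2 * dirichlet_term c w p" for p
  proof -
    obtain x y where p: "p = (x, y)" by (cases p)
    have "(cmod (a + b))\<^sup>2 + (cmod (a - b))\<^sup>2 = 2 * (cmod a)\<^sup>2 + 2 * (cmod b)\<^sup>2" for a b :: complex
      unfolding cmod_power2 by (simp add: power2_eq_square algebra_simps)
    from arg_cong[OF this[of "u x - u y" "w x - w y"], of "\<lambda>r. c x y * r"] show ?thesis
      by (simp add: p dirichlet_term_def algebra_simps)
  qed
  have "dirichlet c (\<lambda>z. u z + w z) + dirichlet c (\<lambda>z. u z - w z)
      = infsum (\<lambda>p. 2 * dirichlet_term c u p + 2 * dirichlet_term c w p) UNIV"
    unfolding dirichlet_def terms[symmetric]
    using fin_energy_add[OF c u w] fin_energy_diff[OF c u w]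
    by (intro infsum_add[symmetric]) (simp_all add: fin_energy_iff_summable)
  also have "\<dots> = 2 * dirichlet c u + 2 * dirichlet c w"
    unfolding dirichlet_def using u w
    by (simp add: fin_energy_iff_summable infsum_add summable_on_cmult_right infsum_cmult_right')
  finally show ?thesis .
qed

lemma dirichlet_add_cmult:
  assumes c: "conductance c" and u: "fin_energy c u" and h: "fin_energy c h"
  shows "dirichlet c (\<lambda>z. u z + s * h z)
    = dirichlet c u + 4 * Re (s * energy c u h) + (cmod s)\<^sup>2 * dirichlet c h"
proof -
  define w where "w = (\<lambda>z. u z + s * h z)"
  have sh: "fin_energy c (\<lambda>z. s * h z)" by (rule fin_energy_cmult[OF h])
  have w: "fin_energy c w" unfolding w_def by (rule fin_energy_add[OF c u sh])
  have "energy c w w = energy c u w + cnj s * energy c h w"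
    using energy_add_left[OF c w u sh, folded w_def] by (simp add: energy_cmult_left)
  also have "energy c u w = energy c u u + s * energy c u h"
    using energy_add_right[OF c u u sh, folded w_def] by (simp add: energy_cmult_right)
  also have "energy c h w = cnj (energy c u h) + s * energy c h h"
    using energy_add_right[OF c h u sh, folded w_def]
    by (simp add: energy_cmult_right energy_cnj_swap[of c h u])
  finally have "energy c w w = energy c u u + (s * energy c u h + cnj (s * energy c u h))
      + cnj s * s * energy c h h"
    by (simp add: algebra_simps)
  then have "complex_of_real (dirichlet c w / 2) = complex_of_real
      (dirichlet c u / 2 + 2 * Re (s * energy c u h) + (cmod s)\<^sup>2 * (dirichlet c h / 2))"
    by (simp only: energy_self u h w complex_add_cnj cnj_mult_self of_real_add of_real_mult)
  then show ?thesis
    unfolding of_real_eq_iff w_def by simp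
qed

lemma dirichlet_eq_0_imp_constant:
  assumes c: "conductance c" and cn: "connected_net c" and f: "fin_energy c f"
    and "dirichlet c f = 0"
  shows "f z = f z'"
proof -
  have "(\<lambda>u v. 0 < c u v)\<^sup>*\<^sup>* z' z"
    using cn by (simp add: connected_net_def)
  then show ?thesis
  proof (induction rule: rtranclp_induct)
    case (step y z)
    have "c y z * (cmod (f y - f z))\<^sup>2 \<le> 0"
      using dirichlet_term_le_dirichlet[OF c f, of y z] \<open>dirichlet c f = 0\<close> by simp
    with \<open>0 < c y z\<close> have "f y = f z"
      by (simp add: mult_le_0_iff)
    with step.IH show ?case by simp
  qed simp
qed

lemma point_evaluation_bound:
  assumes c: "conductance c" and cn: "connected_net c"
  shows "\<exists>K\<ge>0. \<forall>f. fin_energy c f \<longrightarrow> (cmod (f z - f o0))\<^sup>2 \<le> K * dirichlet c f"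
proof -
  have "(\<lambda>u v. 0 < c u v)\<^sup>*\<^sup>* o0 z"
    using cn by (simp add: connected_net_def)
  then show ?thesis
  proof (induction rule: rtranclp_induct)
    case base
    show ?case by (intro exI[of _ 0]) simp
  next
    case (step y z)
    then obtain K where K: "K \<ge> 0"
      and bound: "\<And>f. fin_energy c f \<Longrightarrow> (cmod (f y - f o0))\<^sup>2 \<le> K * dirichlet c f"
      by blast
    show ?case
    proof (intro exI[of _ "2 * K + 2 / c y z"] conjI allI impI)
      show "0 \<le> 2 * K + 2 / c y z"
        using K \<open>0 < c y z\<close> by simp
      fix f assume f: "fin_energy c f"
      have edge: "(cmod (f z - f y))\<^sup>2 \<le> dirichlet c f / c y z"
        using dirichlet_term_le_dirichlet[OF c f, of y z] \<open>0 < c y z\<close>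
        by (simp add: field_simps norm_minus_commute)
      have "cmod (f z - f o0) \<le> cmod (f z - f y) + cmod (f y - f o0)"
        using norm_triangle_ineq[of "f z - f y" "f y - f o0"] by simp
      then have "(cmod (f z - f o0))\<^sup>2 \<le> (cmod (f z - f y) + cmod (f y - f o0))\<^sup>2"
        by (simp add: power_mono)
      also have "\<dots> \<le> 2 * (cmod (f z - f y))\<^sup>2 + 2 * (cmod (f y - f o0))\<^sup>2"
        using sum_squares_bound[of "cmod (f z - f y)" "cmod (f y - f o0)"]
        by (simp add: power2_eq_square algebra_simps)
      also have "\<dots> \<le> (2 * K + 2 / c y z) * dirichlet c f"
        using edge bound[OF f] by (simp add: field_simps)
      finally show "(cmod (f z - f o0))\<^sup>2 \<le> (2 * K + 2 / c y z) * dirichlet c f" .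
    qed
  qed
qed

subsection \<open>Existence of the reproducing kernel\<close>

lemma linear_coeff_eq_0_if_quadratic_nonneg:
  fixes a b :: real
  assumes nonneg: "\<And>t. 0 \<le> a * t + b * t\<^sup>2"
  shows "a = 0"
proof (rule ccontr)
  assume "a \<noteq> 0"
  define B where "B = \<bar>b\<bar> + 1"
  have B: "0 < B" and abs_b: "\<bar>b\<bar> = B - 1"
    by (simp_all add: B_def)
  have "a * (- a / B) + b * (- a / B)\<^sup>2 \<le> a * (- a / B) + \<bar>b\<bar> * (- a / B)\<^sup>2"
    by (simp add: mult_right_mono)
  also have "\<dots> = - (a / B)\<^sup>2"
    using B unfolding abs_b by (simp add: field_simps power2_eq_square)
  also have "\<dots> < 0"
    using \<open>a \<noteq> 0\<close> B by simp
  finally show False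
    using nonneg[of "- a / B"] by simp
qed

lemma energy_eq_0_if_minimal_on_line:
  assumes c: "conductance c" and u: "fin_energy c u" and h: "fin_energy c h"
    and minimal: "\<And>s. dirichlet c u \<le> dirichlet c (\<lambda>z. u z + s * h z)"
  shows "energy c u h = 0"
proof -
  define e where "e = energy c u h"
  \<comment> \<open>along \<open>s = t * cnj e\<close> the first-order term of \<open>dirichlet_add_cmult\<close> is \<open>4 t |e|\<^sup>2\<close>\<close>
  have "0 \<le> 4 * (cmod e)\<^sup>2 * t + (cmod e)\<^sup>2 * dirichlet c h * t\<^sup>2" for t :: real
  proof -
    have "Re (complex_of_real t * cnj e * e) = t * (cmod e)\<^sup>2"
      by (simp add: mult.assoc cnj_mult_self)
    then show ?thesis
      using minimal[of "complex_of_real t * cnj e"]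
        dirichlet_add_cmult[OF c u h, of "complex_of_real t * cnj e"]
      by (simp add: e_def norm_mult power_mult_distrib algebra_simps)
  qed
  then have "4 * (cmod e)\<^sup>2 = 0"
    by (rule linear_coeff_eq_0_if_quadratic_nonneg)
  then show ?thesis by (simp add: e_def)
qed

lemma dirichlet_le_of_pointwise_limit:
  assumes c: "conductance c" and U: "\<And>n. fin_energy c (U n)"
    and lim: "\<And>z. (\<lambda>n. U n z) \<longlonglongrightarrow> u z" and energy_lim: "(\<lambda>n. dirichlet c (U n)) \<longlonglongrightarrow> m"
  shows "fin_energy c u" and "dirichlet c u \<le> m"
proof -
  have finite_sums: "sum (dirichlet_term c u) F \<le> m" if "finite F" for F
  proof (rule LIMSEQ_le[OF _ energy_lim])
    show "(\<lambda>n. sum (dirichlet_term c (U n)) F) \<longlonglongrightarrow> sum (dirichlet_term c u) F"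
      by (intro tendsto_sum) (auto simp: dirichlet_term_def intro!: tendsto_intros lim)
    show "\<exists>N. \<forall>n\<ge>N. sum (dirichlet_term c (U n)) F \<le> dirichlet c (U n)"
      using U \<open>finite F\<close> unfolding dirichlet_def
      by (auto intro!: finite_sum_le_infsum
          simp: fin_energy_iff_summable dirichlet_term_nonneg[OF c])
  qed
  show u: "fin_energy c u"
    unfolding fin_energy_iff_summable
    by (rule nonneg_bdd_above_summable_on) (auto simp: dirichlet_term_nonneg[OF c] bdd_above_def
        intro: finite_sums)
  show "dirichlet c u \<le> m"
    unfolding dirichlet_def using u finite_sums
    by (intro infsum_le_finite_sums)
      (auto simp: fin_energy_iff_summable dirichlet_term_nonneg[OF c])
qed

lemma convergent_if_energy_Cauchy:
  assumes c: "conductance c" and cn: "connected_net c" and U: "\<And>n. fin_energy c (U n)"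
    and base: "\<And>n. U n o0 = U 0 o0"
    and Cauchy: "\<And>e. 0 < e \<Longrightarrow> \<exists>N. \<forall>n\<ge>N. \<forall>k\<ge>N. dirichlet c (\<lambda>z. U n z - U k z) < e"
  shows "convergent (\<lambda>n. U n z)"
proof -
  obtain K where K: "K \<ge> 0"
    and bound: "\<And>f. fin_energy c f \<Longrightarrow> (cmod (f z - f o0))\<^sup>2 \<le> K * dirichlet c f"
    using point_evaluation_bound[OF c cn] by blast
  have "Cauchy (\<lambda>n. U n z)"
  proof (rule CauchyI)
    fix e :: real
    assume "0 < e"
    then obtain N where N: "\<And>n k. N \<le> n \<Longrightarrow> N \<le> k \<Longrightarrow> dirichlet c (\<lambda>z. U n z - U k z) < e\<^sup>2 / (K + 1)"
      using Cauchy[of "e\<^sup>2 / (K + 1)"] K by force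
    have "norm (U n z - U k z) < e" if "N \<le> n" "N \<le> k" for n k
    proof -
      have "(cmod (U n z - U k z))\<^sup>2 \<le> K * dirichlet c (\<lambda>z. U n z - U k z)"
        using bound[OF fin_energy_diff[OF c U[of n] U[of k]]] base[of n] base[of k] by simp
      also have "\<dots> \<le> (K + 1) * dirichlet c (\<lambda>z. U n z - U k z)"
        using dirichlet_nonneg[OF c] by (simp add: mult_right_mono)
      also have "\<dots> < e\<^sup>2"
        using N[OF that] K by (simp add: field_simps)
      finally show ?thesis
        using \<open>0 < e\<close> by (simp add: power_less_imp_less_base)
    qed
    then show "\<exists>M. \<forall>n\<ge>M. \<forall>k\<ge>M. norm (U n z - U k z) < e"
      by blast
  qed
  then show ?thesis
    by (simp add: Cauchy_convergent_iff)
qed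

definition unit_voltages :: "('a \<Rightarrow> 'a \<Rightarrow> real) \<Rightarrow> 'a \<Rightarrow> 'a \<Rightarrow> ('a \<Rightarrow> complex) set" where
  "unit_voltages c o0 x = {u. fin_energy c u \<and> u o0 = 0 \<and> u x = 1}"

lemma unit_voltages_midpoint:
  assumes "conductance c" and "u \<in> unit_voltages c o0 x" and "w \<in> unit_voltages c o0 x"
  shows "(\<lambda>z. (1/2) * (u z + w z)) \<in> unit_voltages c o0 x"
  using assms fin_energy_cmult[OF fin_energy_add[OF assms(1)], of u w "1/2"]
  by (simp add: unit_voltages_def)

lemma dirichlet_diff_le_of_midpoint:
  assumes c: "conductance c" and u: "fin_energy c u" and w: "fin_energy c w"
    and "m \<le> dirichlet c (\<lambda>z. (1/2) * (u z + w z))"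
  shows "dirichlet c (\<lambda>z. u z - w z) \<le> 2 * dirichlet c u + 2 * dirichlet c w - 4 * m"
  using dirichlet_parallelogram[OF c u w] dirichlet_cmult[of c "1/2" "\<lambda>z. u z + w z"] assms(4)
  by (simp add: power2_eq_square)

lemma minimizing_sequence_energy_Cauchy:
  assumes c: "conductance c" and U: "\<And>n. U n \<in> unit_voltages c o0 x"
    and lower: "\<And>w. w \<in> unit_voltages c o0 x \<Longrightarrow> m \<le> dirichlet c w"
    and energy_lim: "(\<lambda>n. dirichlet c (U n)) \<longlonglongrightarrow> m" and "0 < e"
  shows "\<exists>N. \<forall>n\<ge>N. \<forall>k\<ge>N. dirichlet c (\<lambda>z. U n z - U k z) < e"
proof -
  have U_fe: "fin_energy c (U n)" for n
    using U by (simp add: unit_voltages_def)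
  obtain N where N: "\<And>n. N \<le> n \<Longrightarrow> dirichlet c (U n) < m + e / 4"
    using order_tendstoD(2)[OF energy_lim, of "m + e / 4"] \<open>0 < e\<close>
    by (auto simp: eventually_sequentially)
  have "dirichlet c (\<lambda>z. U n z - U k z) < e" if "N \<le> n" "N \<le> k" for n k
    using dirichlet_diff_le_of_midpoint[OF c U_fe U_fe lower[OF unit_voltages_midpoint[OF c U U]],
        of n k] N[OF that(1)] N[OF that(2)] by linarith
  then show ?thesis by blast
qed

lemma minimizing_sequence_exists:
  fixes f :: "'b \<Rightarrow> real"
  assumes "A \<noteq> {}" and "bdd_below (f ` A)"
  obtains U where "\<And>n. U n \<in> A" and "(\<lambda>n. f (U n)) \<longlonglongrightarrow> Inf (f ` A)"
proof -
  let ?m = "Inf (f ` A)"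
  have "\<exists>u\<in>A. f u < ?m + inverse (real (Suc n))" for n
    using cInf_lessD[of "f ` A" "?m + inverse (real (Suc n))"] assms(1) by auto
  then obtain U where U: "\<And>n. U n \<in> A" and less: "\<And>n. f (U n) < ?m + inverse (real (Suc n))"
    by metis
  have "(\<lambda>n. f (U n)) \<longlonglongrightarrow> ?m"
  proof (rule tendsto_sandwich)
    show "\<forall>\<^sub>F n in sequentially. ?m \<le> f (U n)"
      using cInf_lower[OF imageI[OF U] assms(2)] by simp
    show "\<forall>\<^sub>F n in sequentially. f (U n) \<le> ?m + inverse (real (Suc n))"
      using less by (simp add: less_imp_le)
    show "(\<lambda>n. ?m + inverse (real (Suc n))) \<longlonglongrightarrow> ?m"
      using tendsto_add[OF tendsto_const LIMSEQ_inverse_real_of_nat, of ?m] by simp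
  qed simp
  with U show ?thesis by (rule that)
qed

lemma dirichlet_minimizer_exists:
  assumes c: "conductance c" and cn: "connected_net c" and lf: "locally_finite_net c" and "x \<noteq> o0"
  shows "\<exists>u\<in>unit_voltages c o0 x. \<forall>w\<in>unit_voltages c o0 x. dirichlet c u \<le> dirichlet c w"
proof -
  let ?A = "unit_voltages c o0 x"
  define m where "m = Inf (dirichlet c ` ?A)"
  have "indicator {x} \<in> ?A"
    using \<open>x \<noteq> o0\<close> fin_energy_indicator[OF c lf] by (simp add: unit_voltages_def)
  then have nonempty: "?A \<noteq> {}" by blast
  have bdd: "bdd_below (dirichlet c ` ?A)"
    using dirichlet_nonneg[OF c] by (auto simp: bdd_below_def)
  have m_le: "m \<le> dirichlet c w" if "w \<in> ?A" for w
    unfolding m_def using that bdd by (rule cInf_lower[OF imageI])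
  obtain U where U: "\<And>n. U n \<in> ?A" and energy_lim: "(\<lambda>n. dirichlet c (U n)) \<longlonglongrightarrow> m"
    unfolding m_def using minimizing_sequence_exists[OF nonempty bdd] by blast
  have U_fe: "fin_energy c (U n)" and U_o: "U n o0 = 0" and U_x: "U n x = 1" for n
    using U by (auto simp: unit_voltages_def)
  define u where "u z = lim (\<lambda>n. U n z)" for z
  have lim: "(\<lambda>n. U n z) \<longlonglongrightarrow> u z" for z
    unfolding u_def convergent_LIMSEQ_iff[symmetric]
    using minimizing_sequence_energy_Cauchy[OF c U m_le energy_lim]
    by (intro convergent_if_energy_Cauchy[of c U o0, OF c cn U_fe]) (simp_all add: U_o)
  have "u \<in> ?A"
    using dirichlet_le_of_pointwise_limit(1)[OF c U_fe lim energy_lim] lim[of o0] lim[of x]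
    by (simp add: unit_voltages_def U_o U_x LIMSEQ_const_iff)
  moreover have "dirichlet c u \<le> dirichlet c w" if "w \<in> ?A" for w
    using dirichlet_le_of_pointwise_limit(2)[OF c U_fe lim energy_lim] m_le[OF that] by linarith
  ultimately show ?thesis by blast
qed

lemma energy_orthogonal_of_minimizer:
  assumes c: "conductance c" and u: "u \<in> unit_voltages c o0 x"
    and minimal: "\<And>w. w \<in> unit_voltages c o0 x \<Longrightarrow> dirichlet c u \<le> dirichlet c w"
    and h: "fin_energy c h" and "h o0 = 0" and "h x = 0"
  shows "energy c u h = 0"
proof (rule energy_eq_0_if_minimal_on_line[OF c _ h])
  show "fin_energy c u"
    using u by (simp add: unit_voltages_def)
  show "dirichlet c u \<le> dirichlet c (\<lambda>z. u z + s * h z)" for s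
    using assms by (intro minimal) (simp add: unit_voltages_def fin_energy_add fin_energy_cmult)
qed

lemma energy_minimizer_reproduces:
  assumes c: "conductance c" and u: "u \<in> unit_voltages c o0 x"
    and minimal: "\<And>w. w \<in> unit_voltages c o0 x \<Longrightarrow> dirichlet c u \<le> dirichlet c w"
    and f: "fin_energy c f"
  shows "energy c u f = (f x - f o0) * complex_of_real (dirichlet c u / 2)"
proof -
  define d where "d = f x - f o0"
  have uf: "fin_energy c u" and "u o0 = 0" and "u x = 1"
    using u by (simp_all add: unit_voltages_def)
  have f': "fin_energy c (\<lambda>z. f z - f o0)"
    using f fin_energy_mod_const[OF mod_const_minus_const] by blast
  have du: "fin_energy c (\<lambda>z. d * u z)"
    by (rule fin_energy_cmult[OF uf])
  have "energy c u (\<lambda>z. (f z - f o0) - d * u z) = 0"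
    by (rule energy_orthogonal_of_minimizer[OF c u minimal fin_energy_diff[OF c f' du]])
      (simp_all add: \<open>u o0 = 0\<close> \<open>u x = 1\<close> d_def)
  moreover have "energy c u (\<lambda>z. (f z - f o0) - d * u z) = energy c u f - d * energy c u u"
    using energy_diff_right[OF c uf f' du] energy_mod_const_right[OF mod_const_minus_const]
    by (simp add: energy_cmult_right)
  ultimately show ?thesis
    using energy_self[OF uf] by (simp add: d_def)
qed

lemma is_vx_exists:
  assumes "network c"
  shows "\<exists>v. is_vx c o0 x v"
proof -
  have c: "conductance c" and cn: "connected_net c" and lf: "locally_finite_net c"
    using assms by (simp_all add: network_def)
  show ?thesis
  proof (cases "x = o0")
    case True
    then show ?thesis
      by (intro exI[of _ "\<lambda>z. 0"])
        (simp add: is_vx_def fin_energy_const energy_def case_prod_unfold)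
  next
    case False
    then obtain u where u: "u \<in> unit_voltages c o0 x"
      and minimal: "\<And>w. w \<in> unit_voltages c o0 x \<Longrightarrow> dirichlet c u \<le> dirichlet c w"
      using dirichlet_minimizer_exists[OF c cn lf] by blast
    have uf: "fin_energy c u" and "u o0 = 0" and "u x = 1"
      using u by (simp_all add: unit_voltages_def)
    then have "dirichlet c u \<noteq> 0"
      using dirichlet_eq_0_imp_constant[OF c cn uf, of x o0] by auto
    define v where "v = (\<lambda>z. complex_of_real (2 / dirichlet c u) * u z)"
    have "is_vx c o0 x v"
      unfolding is_vx_def
    proof (intro conjI allI impI)
      show "fin_energy c v"
        unfolding v_def by (rule fin_energy_cmult[OF uf])
      fix f
      assume "fin_energy c f"
      have "energy c v f = complex_of_real (2 / dirichlet c u) * energy c u f"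
        unfolding v_def energy_cmult_left by simp
      also have "\<dots> = f x - f o0"
        using energy_minimizer_reproduces[OF c u minimal \<open>fin_energy c f\<close>] \<open>dirichlet c u \<noteq> 0\<close>
        by (simp add: field_simps)
      finally show "energy c v f = f x - f o0" .
    qed
    then show ?thesis by blast
  qed
qed

lemma is_vx_vx: "network c \<Longrightarrow> is_vx c o0 x (vx c o0 x)"
  unfolding vx_def by (rule someI_ex[OF is_vx_exists])

subsection \<open>The Laplacian and the adjoint of the inclusion\<close>

lemma laplacian_mod_const: "mod_const f g \<Longrightarrow> laplacian c f = laplacian c g"
  by (auto simp: laplacian_def mod_const_def fun_eq_iff)

lemma laplacian_lincomb:
  assumes "finite S"
  shows "laplacian c (\<lambda>z. \<Sum>x\<in>S. a x * f x z) y = (\<Sum>x\<in>S. a x * laplacian c (f x) y)"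
proof -
  define N where "N = {z. 0 < c y z}"
  have "laplacian c (\<lambda>z. \<Sum>x\<in>S. a x * f x z) y
      = (\<Sum>z\<in>N. \<Sum>x\<in>S. a x * (complex_of_real (c y z) * (f x y - f x z)))"
    unfolding laplacian_def N_def[symmetric]
    by (simp add: sum_subtractf[symmetric] sum_distrib_left algebra_simps)
  also have "\<dots> = (\<Sum>x\<in>S. a x * laplacian c (f x) y)"
    unfolding laplacian_def N_def[symmetric] by (subst sum.swap) (simp add: sum_distrib_left)
  finally show ?thesis .
qed

lemma laplacian_vx:
  assumes "network c"
  shows "laplacian c (vx c o0 x) y = indicator {x} y - indicator {o0} y"
proof -
  have c: "conductance c" and lf: "locally_finite_net c"
    using assms by (simp_all add: network_def)
  have "laplacian c (vx c o0 x) y = energy c (indicator {y}) (vx c o0 x)"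
    by (rule energy_indicator_left[OF c lf, symmetric])
  also have "\<dots> = cnj (energy c (vx c o0 x) (indicator {y}))"
    by (rule energy_cnj_swap)
  also have "energy c (vx c o0 x) (indicator {y}) = indicator {y} x - indicator {y} o0"
    using is_vx_vx[OF assms, of o0 x] fin_energy_indicator[OF c lf, of y] by (simp add: is_vx_def)
  finally show ?thesis
    by (simp add: indicator_def eq_commute[of y])
qed

definition vx_comb :: "('a \<Rightarrow> 'a \<Rightarrow> real) \<Rightarrow> 'a \<Rightarrow> 'a set \<Rightarrow> ('a \<Rightarrow> complex) \<Rightarrow> 'a \<Rightarrow> complex" where
  "vx_comb c o0 S a = (\<lambda>z. \<Sum>x\<in>S. a x * vx c o0 x z)"

lemma fin_energy_vx_comb:
  assumes "network c" and "finite S"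
  shows "fin_energy c (vx_comb c o0 S a)"
  unfolding vx_comb_def using assms is_vx_vx[OF assms(1)]
  by (intro fin_energy_sum) (auto simp: network_def is_vx_def)

lemma laplacian_vx_comb:
  assumes "network c" and "finite S"
  shows "laplacian c (vx_comb c o0 S a) y = (\<Sum>x\<in>S. a x * (indicator {x} y - indicator {o0} y))"
  unfolding vx_comb_def by (simp add: laplacian_lincomb assms laplacian_vx)

lemma energy_vx_comb_left:
  assumes "network c" and "finite S" and "fin_energy c f"
  shows "energy c (vx_comb c o0 S a) f = (\<Sum>x\<in>S. cnj (a x) * (f x - f o0))"
proof -
  have "conductance c"
    using assms(1) by (simp add: network_def)
  then show ?thesis
    using is_vx_vx[OF assms(1)] assms unfolding vx_comb_def
    by (simp add: energy_sum_left is_vx_def)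
qed

lemma incl_adj_mod_const: "mod_const u u' \<Longrightarrow> incl_adj c b u w \<longleftrightarrow> incl_adj c b u' w"
  by (simp add: incl_adj_def energy_mod_const_left)

lemma incl_adj_vx_comb:
  assumes c: "network c" and b: "network b" and le: "\<And>x y. b x y \<le> c x y" and "finite S"
  shows "incl_adj c b (vx_comb b o0 S a) (vx_comb c o0 S a)"
  unfolding incl_adj_def
proof (intro conjI allI impI)
  show "fin_energy c (vx_comb c o0 S a)"
    by (rule fin_energy_vx_comb[OF c \<open>finite S\<close>])
  fix z
  assume z: "fin_energy c z"
  have "fin_energy b z"
    using b by (intro fin_energy_mono[OF _ le z]) (simp add: network_def)
  then show "energy c (vx_comb c o0 S a) z = energy b (vx_comb b o0 S a) z"
    using z by (simp add: energy_vx_comb_left c b \<open>finite S\<close>)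
qed

lemma incl_adj_unique:
  assumes c: "conductance c" and cn: "connected_net c"
    and w: "incl_adj c b u w" and w': "incl_adj c b u w'"
  shows "mod_const w w'"
proof -
  define d where "d z = w z - w' z" for z
  have wf: "fin_energy c w" and w'f: "fin_energy c w'"
    using w w' by (simp_all add: incl_adj_def)
  then have df: "fin_energy c d"
    unfolding d_def by (rule fin_energy_diff[OF c])
  have "energy c d d = energy c w d - energy c w' d"
    unfolding d_def by (rule energy_diff_left[OF c df[unfolded d_def] wf w'f])
  also have "\<dots> = 0"
    using w w' df by (simp add: incl_adj_def)
  finally have "dirichlet c d = 0"
    by (simp add: energy_self[OF df])
  then have "d z = d o0" for z
    by (rule dirichlet_eq_0_imp_constant[OF c cn df])
  then show ?thesis
    unfolding mod_const_def d_def by (metis diff_add_cancel add.commute add_diff_eq)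
qed

theorem lemma3p10:
  fixes c b :: "'a::countable \<Rightarrow> 'a \<Rightarrow> real" and o0 :: 'a
  assumes "network c" and "network b" and "\<forall>x y. b x y \<le> c x y"
  shows "\<forall>u \<in> lap_dom b o0.
           (\<exists>w. incl_adj c b u w) \<and>
           (\<forall>w. incl_adj c b u w \<longrightarrow>
                 w \<in> lap_dom c o0 \<and> mod_const (laplacian b u) (laplacian c w))"
proof
  fix u
  assume "u \<in> lap_dom b o0"
  then obtain S a where S: "finite S" and u: "mod_const u (vx_comb b o0 S a)"
    by (auto simp: lap_dom_def vx_comb_def)
  have c: "conductance c" and cn: "connected_net c"
    using assms(1) by (simp_all add: network_def)
  have adjoint: "incl_adj c b u (vx_comb c o0 S a)"
    using incl_adj_vx_comb[OF assms(1,2) _ S] incl_adj_mod_const[OF u] assms(3) by blast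
  have laplacians: "laplacian b u = laplacian c (vx_comb c o0 S a)"
    using laplacian_mod_const[OF u] by (simp add: fun_eq_iff laplacian_vx_comb assms S)
  show "(\<exists>w. incl_adj c b u w) \<and>
      (\<forall>w. incl_adj c b u w \<longrightarrow> w \<in> lap_dom c o0 \<and> mod_const (laplacian b u) (laplacian c w))"
  proof (intro conjI allI impI)
    show "\<exists>w. incl_adj c b u w"
      using adjoint by blast
    fix w
    assume "incl_adj c b u w"
    then have w: "mod_const w (vx_comb c o0 S a)"
      using incl_adj_unique[OF c cn _ adjoint] by blast
    then show "w \<in> lap_dom c o0"
      using S by (auto simp: lap_dom_def vx_comb_def)
    show "mod_const (laplacian b u) (laplacian c w)"
      using laplacians laplacian_mod_const[OF w] by (auto simp: mod_const_def)
  qed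
qed

end
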